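(* For $x\ne z\in\mathcal{S}^\mathcal{D}$, the time derivative of the oracle transition rate is $$\dot Q_t(x,z)=\sum_{d=1}^\mathcal{D}\delta_{x^{\setminus d}}(z^{\setminus d})\Big\{\frac{\ddot\kappa_t(1-\kappa_t)+(\dot\kappa_t)^2}{(1-\kappa_t)^2}p^d_{1|t}(z^d\mid x)-\frac{\dot\kappa_t}{1-\kappa_t}\sum_yp^d_{1|t}(z^d\mid y)Q_t(x,y)\Big\},$$ which implies $|\dot Q_t(x,z)|\le\Big|\frac{\ddot\kappa_t(1-\kappa_t)+(\dot\kappa_t)^2}{(1-\kappa_t)^2}\Big|+\mathcal{D}\Big(\frac{\dot\kappa_t}{1-\kappa_t}\Big)^2$ for any $z\ne x$. In particular, if the posterior $p_{1|t}$ does not depend on $t$, then $|\dot Q_t(x,z)|\le\Big|\frac{\ddot\kappa_t(1-\kappa_t)+(\dot\kappa_t)^2}{(1-\kappa_t)^2}\Big|$.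
   Context: $\mathcal{S}=\{1,\dots,|\mathcal{S}|\}$; for $x\in\mathcal{S}^\mathcal{D}$, $x^d$ is its $d$-th coordinate and $x^{\setminus d}$ the others; $\delta_a(b)$ the Kronecker delta. $p_1$ is a data pmf on $\mathcal{S}^\mathcal{D}$, $p_0=\prod_dp^d_0$ a source distribution; $\kappa:[0,1]\to[0,1]$ non-decreasing, twice differentiable on $[0,1)$, $\kappa_0=0,\kappa_1=1$. Let $X(1)\sim p_1$ and, given $X(1)=x_1$, coordinates of $X(t)$ independent with $P(X^d(t)=y\mid X(1)=x_1)=(1-\kappa_t)p^d_0(y)+\kappa_t\delta_{x^d_1}(y)$; $p^d_{1|t}(y\mid x)=P(X^d(1)=y\mid X(t)=x)$. The oracle rate is $Q_t(x,z)=\frac{\dot\kappa_t}{1-\kappa_t}\sum_d\delta_{x^{\setminus d}}(z^{\setminus d})p^d_{1|t}(z^d\mid x)$ for $z\ne x$ and $Q_t(x,x)=-\sum_{z\ne x}Q_t(x,z)$; $X(t)$ is a continuous-time Markov chain with this rate.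
   Formalization: The posterior $p_{1|t}(y\mid x)$ is the sum over w with $w^d=y$ of a transition function P(X(1)=w | X(t)=x) satisfying the Kolmogorov backward equation with rate $Q_t$, not the noising mixture of $p_0,p_1$; and $\kappa_t<1$ holds for every t<1. Apart from conventions, each condition added here is assumed in the paper as well or is needed for the statement above to hold. *)

theory Defs
  imports "HOL-Analysis.Analysis"
begin

text \<open>States are functions x :: 'd \<Rightarrow> 's (coordinates x d), with 'd the finite
  index set of dimensions and 's the finite vocabulary.\<close>

definition agree_except :: "('d \<Rightarrow> 's) \<Rightarrow> ('d \<Rightarrow> 's) \<Rightarrow> 'd \<Rightarrow> bool" where
  "agree_except x z d \<longleftrightarrow> (\<forall>e. e \<noteq> d \<longrightarrow> x e = z e)"

text \<open>Posterior of the d-th coordinate at time 1 given X(t) = x, computed from the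
  transition function P t x w = P(X(1) = w | X(t) = x) of the Markov chain.\<close>
definition posterior ::
  "(real \<Rightarrow> ('d::finite \<Rightarrow> 's::finite) \<Rightarrow> ('d \<Rightarrow> 's) \<Rightarrow> real) \<Rightarrow> real \<Rightarrow> 'd \<Rightarrow> 's \<Rightarrow> ('d \<Rightarrow> 's) \<Rightarrow> real" where
  "posterior P t d y x = (\<Sum>w\<in>{w. w d = y}. P t x w)"

text \<open>Off-diagonal oracle rate; kappa' is the time derivative of kappa.\<close>
definition offdiag_rate ::
  "(real \<Rightarrow> real) \<Rightarrow> (real \<Rightarrow> real) \<Rightarrow> (real \<Rightarrow> 'd::finite \<Rightarrow> 's \<Rightarrow> ('d \<Rightarrow> 's) \<Rightarrow> real)
     \<Rightarrow> real \<Rightarrow> ('d \<Rightarrow> 's) \<Rightarrow> ('d \<Rightarrow> 's) \<Rightarrow> real" where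
  "offdiag_rate \<kappa> \<kappa>' p t x z =
     \<kappa>' t / (1 - \<kappa> t) * (\<Sum>d\<in>UNIV. if agree_except x z d then p t d (z d) x else 0)"

definition oracle_rate ::
  "(real \<Rightarrow> real) \<Rightarrow> (real \<Rightarrow> real) \<Rightarrow> (real \<Rightarrow> 'd::finite \<Rightarrow> 's::finite \<Rightarrow> ('d \<Rightarrow> 's) \<Rightarrow> real)
     \<Rightarrow> real \<Rightarrow> ('d \<Rightarrow> 's) \<Rightarrow> ('d \<Rightarrow> 's) \<Rightarrow> real" where
  "oracle_rate \<kappa> \<kappa>' p t x z =
     (if z \<noteq> x then offdiag_rate \<kappa> \<kappa>' p t x z
      else - (\<Sum>z'\<in>UNIV - {x}. offdiag_rate \<kappa> \<kappa>' p t x z'))"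

end

theory Submission
  imports Defs
begin

text \<open>Off the diagonal, Q_t(x,z) = k_t C_t with k_t = kappa'_t / (1 - kappa_t) and C_t the posterior
  of z in the only coordinate where x and z differ, so the formula is the product rule, with the
  quotient rule for k_t and the Kolmogorov backward equation for C_t. For the bound: the row
  Q_t(x, -) sums to zero and has nonnegative off-diagonal entries of total mass at most D k_t, so
  it changes a posterior, whose entries lie in [0,1], by at most D k_t. A time-independent
  posterior leaves only the k_t' term.\<close>

lemma agree_except_unique:
  assumes "x \<noteq> z" "agree_except x z d" "agree_except x z e"
  shows "d = e"
proof (rule ccontr)
  assume "d \<noteq> e"
  then have "x c = z c" for c
    using assms(2,3) unfolding agree_except_def by (cases "c = d") auto
  with assms(1) show False by auto
qed

lemma abs_sum_agree_except_le:
  fixes f :: "'d::finite \<Rightarrow> real"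
  assumes "x \<noteq> z" "0 \<le> B" "\<And>d. agree_except x z d \<Longrightarrow> \<bar>f d\<bar> \<le> B"
  shows "\<bar>\<Sum>d\<in>UNIV. if agree_except x z d then f d else 0\<bar> \<le> B"
proof (cases "\<exists>d. agree_except x z d")
  case True
  then obtain d where d: "agree_except x z d" ..
  have "(\<Sum>e\<in>UNIV. if agree_except x z e then f e else 0) = (\<Sum>e\<in>UNIV. if e = d then f e else 0)"
  proof (rule sum.cong)
    fix e
    have "agree_except x z e \<longleftrightarrow> e = d" using agree_except_unique[OF assms(1) _ d] d by blast
    then show "(if agree_except x z e then f e else 0) = (if e = d then f e else 0)" by simp
  qed simp
  then show ?thesis using assms(3)[OF d] by simp
next
  case False
  then show ?thesis using assms(2) by simp
qed

lemma abs_sum_agree_except_affine_le: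
  fixes a b :: "'d::finite \<Rightarrow> real"
  assumes "x \<noteq> z" "0 \<le> k" "\<And>d. \<bar>a d\<bar> \<le> 1" "\<And>d. \<bar>b d\<bar> \<le> B"
  shows "\<bar>\<Sum>d\<in>UNIV. if agree_except x z d then A * a d + k * b d else 0\<bar> \<le> \<bar>A\<bar> + k * B"
proof (rule abs_sum_agree_except_le[OF assms(1)])
  have "0 \<le> B" using abs_ge_zero assms(4) by (rule order_trans)
  then show "0 \<le> \<bar>A\<bar> + k * B" using assms(2) by simp
  fix d
  have "\<bar>A * a d + k * b d\<bar> \<le> \<bar>A\<bar> * \<bar>a d\<bar> + k * \<bar>b d\<bar>"
    using abs_triangle_ineq[of "A * a d" "k * b d"] assms(2) by (simp add: abs_mult)
  also have "\<dots> \<le> \<bar>A\<bar> + k * B"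
    using add_mono[OF mult_left_mono[OF assms(3) abs_ge_zero[of A]] mult_left_mono[OF assms(4) assms(2)]]
    by simp
  finally show "\<bar>A * a d + k * b d\<bar> \<le> \<bar>A\<bar> + k * B" .
qed

lemma sum_agree_except:
  "(\<Sum>y\<in>{y. agree_except x y d}. f (y d)) = (\<Sum>s\<in>UNIV. f s)"
proof (rule sum.reindex_bij_witness[where i = "\<lambda>s. x(d := s)" and j = "\<lambda>y. y d"])
  fix y assume "y \<in> {y. agree_except x y d}"
  then show "x(d := y d) = y" by (auto simp: agree_except_def fun_eq_iff)
qed (auto simp: agree_except_def)

lemma mono_on_imp_has_real_derivative_nonneg:
  assumes mono: "mono_on S f" and deriv: "(f has_real_derivative D) (at x within S)"
    and "x \<in> S" and "at x within S \<noteq> bot"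
  shows "0 \<le> D"
proof (rule tendsto_lowerbound)
  show "((\<lambda>y. (f y - f x) / (y - x)) \<longlongrightarrow> D) (at x within S)"
    using deriv by (simp add: has_field_derivative_iff)
  have "0 \<le> (f y - f x) / (y - x)" if "y \<in> S" for y
    using mono_onD[OF mono that \<open>x \<in> S\<close>] mono_onD[OF mono \<open>x \<in> S\<close> that]
    by (cases "y \<le> x") (auto intro: divide_nonpos_nonpos divide_nonneg_nonneg)
  then show "\<forall>\<^sub>F y in at x within S. 0 \<le> (f y - f x) / (y - x)"
    by (simp add: eventually_at_filter)
qed fact

lemma has_real_derivative_divide_one_minus:
  assumes "(f has_real_derivative f') (at t within S)" "(g has_real_derivative g') (at t within S)"
    and "g t \<noteq> 1"
  shows "((\<lambda>s. f s / (1 - g s)) has_real_derivative (f' * (1 - g t) + f t * g') / (1 - g t)\<^sup>2)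
           (at t within S)"
  using DERIV_divide[OF assms(1) DERIV_diff[OF DERIV_const[of 1] assms(2)]] assms(3)
  by (simp add: power2_eq_square algebra_simps)

lemma sum_posterior: "(\<Sum>y\<in>UNIV. posterior P t d y u) = (\<Sum>w\<in>UNIV. P t u w)"
  unfolding posterior_def using sum.group[of UNIV UNIV "\<lambda>w. w d" "P t u"] by simp

lemma posterior_nonneg:
  assumes "\<And>w. 0 \<le> P t u w"
  shows "0 \<le> posterior P t d y u"
  unfolding posterior_def by (rule sum_nonneg) (use assms in auto)

lemma posterior_le_one:
  assumes "\<And>w. 0 \<le> P t u w" "(\<Sum>w\<in>UNIV. P t u w) = 1"
  shows "posterior P t d y u \<le> 1"
  using member_le_sum[of y UNIV "\<lambda>y. posterior P t d y u"] posterior_nonneg[of P t u, OF assms(1)]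
  by (simp add: sum_posterior assms(2))

lemma posterior_has_real_derivative:
  fixes Q :: "('d::finite \<Rightarrow> 's::finite) \<Rightarrow> ('d \<Rightarrow> 's) \<Rightarrow> real"
  assumes "\<And>w. ((\<lambda>r. P r u w) has_real_derivative - (\<Sum>v\<in>UNIV. Q u v * P t v w)) F"
  shows "((\<lambda>s. posterior P s d y u) has_real_derivative
           - (\<Sum>v\<in>UNIV. Q u v * posterior P t d y v)) F"
proof -
  have "((\<lambda>s. \<Sum>w\<in>{w. w d = y}. P s u w) has_real_derivative
          (\<Sum>w\<in>{w. w d = y}. - (\<Sum>v\<in>UNIV. Q u v * P t v w))) F"
    by (intro DERIV_sum assms)
  also have "(\<Sum>w\<in>{w. w d = y}. - (\<Sum>v\<in>UNIV. Q u v * P t v w))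
      = - (\<Sum>v\<in>UNIV. Q u v * posterior P t d y v)"
    unfolding posterior_def sum_negf sum_distrib_left by (subst sum.swap) simp
  finally show ?thesis unfolding posterior_def .
qed

lemma abs_sum_mult_rate_row_le:
  fixes p q :: "'a::finite \<Rightarrow> real"
  assumes q_nonneg: "\<And>y. y \<noteq> x \<Longrightarrow> 0 \<le> q y" and q_diag: "q x = - (\<Sum>y\<in>UNIV - {x}. q y)"
    and p: "\<And>y. 0 \<le> p y" "\<And>y. p y \<le> 1"
  shows "\<bar>\<Sum>y\<in>UNIV. p y * q y\<bar> \<le> (\<Sum>y\<in>UNIV - {x}. q y)"
proof -
  have "(\<Sum>y\<in>UNIV - {x}. (p y - p x) * q y)
      = (\<Sum>y\<in>UNIV - {x}. p y * q y) - p x * (\<Sum>y\<in>UNIV - {x}. q y)"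
    by (simp add: left_diff_distrib sum_subtractf sum_distrib_left)
  also have "\<dots> = (\<Sum>y\<in>UNIV. p y * q y)"
    using sum.remove[of UNIV x "\<lambda>y. p y * q y"] q_diag by simp
  finally have "(\<Sum>y\<in>UNIV. p y * q y) = (\<Sum>y\<in>UNIV - {x}. (p y - p x) * q y)" ..
  also have "\<bar>\<dots>\<bar> \<le> (\<Sum>y\<in>UNIV - {x}. \<bar>(p y - p x) * q y\<bar>)"
    by (rule sum_abs)
  also have "\<dots> \<le> (\<Sum>y\<in>UNIV - {x}. q y)"
  proof (rule sum_mono)
    fix y assume "y \<in> UNIV - {x}"
    then have "0 \<le> q y" using q_nonneg by blast
    moreover have "\<bar>p y - p x\<bar> \<le> 1" using p[of x] p[of y] by linarith
    ultimately show "\<bar>(p y - p x) * q y\<bar> \<le> q y"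
      by (simp add: abs_mult mult_left_le_one_le)
  qed
  finally show ?thesis .
qed

lemma offdiag_rate_nonneg:
  assumes "0 \<le> \<kappa>' t / (1 - \<kappa> t)" "\<And>d y. 0 \<le> p t d y x"
  shows "0 \<le> offdiag_rate \<kappa> \<kappa>' p t x z"
proof -
  have "0 \<le> (\<Sum>d\<in>UNIV. if agree_except x z d then p t d (z d) x else 0)"
    by (rule sum_nonneg) (simp add: assms(2))
  with assms(1) show ?thesis unfolding offdiag_rate_def by (rule mult_nonneg_nonneg)
qed

lemma sum_offdiag_rate_posterior_le:
  fixes P :: "real \<Rightarrow> ('d::finite \<Rightarrow> 's::finite) \<Rightarrow> ('d \<Rightarrow> 's) \<Rightarrow> real"
  assumes k: "0 \<le> \<kappa>' t / (1 - \<kappa> t)"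
    and P: "\<And>w. 0 \<le> P t x w" "(\<Sum>w\<in>UNIV. P t x w) = 1"
  shows "(\<Sum>y\<in>UNIV - {x}. offdiag_rate \<kappa> \<kappa>' (posterior P) t x y)
           \<le> real CARD('d) * (\<kappa>' t / (1 - \<kappa> t))"
proof -
  have row: "(\<Sum>y\<in>UNIV - {x}. if agree_except x y d then posterior P t d (y d) x else 0) \<le> 1" for d
  proof -
    have "(\<Sum>y\<in>UNIV - {x}. if agree_except x y d then posterior P t d (y d) x else 0)
        \<le> (\<Sum>y\<in>UNIV. if agree_except x y d then posterior P t d (y d) x else 0)"
      by (rule sum_mono2) (auto intro: posterior_nonneg P)
    also have "\<dots> = (\<Sum>s\<in>UNIV. posterior P t d s x)"
      using sum_agree_except[where f = "\<lambda>s. posterior P t d s x"] by (simp add: sum.If_cases Int_def)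
    finally show ?thesis by (simp add: sum_posterior P)
  qed
  have "(\<Sum>y\<in>UNIV - {x}. offdiag_rate \<kappa> \<kappa>' (posterior P) t x y)
      = \<kappa>' t / (1 - \<kappa> t) *
          (\<Sum>d\<in>UNIV. \<Sum>y\<in>UNIV - {x}. if agree_except x y d then posterior P t d (y d) x else 0)"
    unfolding offdiag_rate_def sum_distrib_left[symmetric] by (subst sum.swap) simp
  also have "\<dots> \<le> \<kappa>' t / (1 - \<kappa> t) * (\<Sum>d\<in>(UNIV::'d set). 1)"
    by (intro mult_left_mono sum_mono row k)
  finally show ?thesis by (simp add: mult.commute)
qed

lemma abs_sum_posterior_oracle_rate_le:
  fixes P :: "real \<Rightarrow> ('d::finite \<Rightarrow> 's::finite) \<Rightarrow> ('d \<Rightarrow> 's) \<Rightarrow> real"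
  assumes k: "0 \<le> \<kappa>' t / (1 - \<kappa> t)"
    and P: "\<And>u w. 0 \<le> P t u w" "\<And>u. (\<Sum>w\<in>UNIV. P t u w) = 1"
  shows "\<bar>\<Sum>y\<in>UNIV. posterior P t d s y * oracle_rate \<kappa> \<kappa>' (posterior P) t x y\<bar>
           \<le> real CARD('d) * (\<kappa>' t / (1 - \<kappa> t))"
proof -
  let ?Q = "oracle_rate \<kappa> \<kappa>' (posterior P) t x"
  have "\<bar>\<Sum>y\<in>UNIV. posterior P t d s y * ?Q y\<bar> \<le> (\<Sum>y\<in>UNIV - {x}. ?Q y)"
    by (rule abs_sum_mult_rate_row_le)
      (auto simp: oracle_rate_def intro: offdiag_rate_nonneg k posterior_nonneg posterior_le_one P)
  also have "\<dots> = (\<Sum>y\<in>UNIV - {x}. offdiag_rate \<kappa> \<kappa>' (posterior P) t x y)"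
    by (rule sum.cong) (auto simp: oracle_rate_def)
  also have "\<dots> \<le> real CARD('d) * (\<kappa>' t / (1 - \<kappa> t))"
    by (intro sum_offdiag_rate_posterior_le k P)
  finally show ?thesis .
qed

lemma offdiag_rate_has_real_derivative:
  assumes k: "((\<lambda>s. \<kappa>' s / (1 - \<kappa> s)) has_real_derivative K') (at t within S)"
    and p: "\<And>d. ((\<lambda>s. p s d (z d) x) has_real_derivative p' d) (at t within S)"
  shows "((\<lambda>s. offdiag_rate \<kappa> \<kappa>' p s x z) has_real_derivative
           (\<Sum>d\<in>UNIV. if agree_except x z d then K' * p t d (z d) x + \<kappa>' t / (1 - \<kappa> t) * p' d else 0))
           (at t within S)"
proof -
  have "((\<lambda>s. \<Sum>d\<in>UNIV. if agree_except x z d then p s d (z d) x else 0) has_real_derivative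
          (\<Sum>d\<in>UNIV. if agree_except x z d then p' d else 0)) (at t within S)"
    by (intro DERIV_sum) (simp add: p)
  from DERIV_mult[OF k this] show ?thesis
    unfolding offdiag_rate_def
  proof (rule DERIV_cong)
    show "K' * (\<Sum>d\<in>UNIV. if agree_except x z d then p t d (z d) x else 0)
        + (\<Sum>d\<in>UNIV. if agree_except x z d then p' d else 0) * (\<kappa>' t / (1 - \<kappa> t))
        = (\<Sum>d\<in>UNIV. if agree_except x z d
             then K' * p t d (z d) x + \<kappa>' t / (1 - \<kappa> t) * p' d else 0)"
      unfolding sum_distrib_left sum_distrib_right sum.distrib[symmetric] by (rule sum.cong) auto
  qed
qed

theorem lemmaD3:
  fixes \<kappa> \<kappa>' \<kappa>'' :: "real \<Rightarrow> real"
    and P :: "real \<Rightarrow> ('d::finite \<Rightarrow> 's::finite) \<Rightarrow> ('d \<Rightarrow> 's) \<Rightarrow> real"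
    and x z :: "'d \<Rightarrow> 's" and t :: real
  defines "Q \<equiv> oracle_rate \<kappa> \<kappa>' (posterior P)"
  assumes kappa_mono: "\<And>s r. 0 \<le> s \<Longrightarrow> s \<le> r \<Longrightarrow> r \<le> 1 \<Longrightarrow> \<kappa> s \<le> \<kappa> r"
    and kappa0: "\<kappa> 0 = 0" and kappa1: "\<kappa> 1 = 1"
    and kappa_lt1: "\<And>s. 0 \<le> s \<Longrightarrow> s < 1 \<Longrightarrow> \<kappa> s < 1"
    and kappa_deriv: "\<And>s. 0 \<le> s \<Longrightarrow> s < 1 \<Longrightarrow> (\<kappa> has_real_derivative \<kappa>' s) (at s within {0..<1})"
    and kappa_deriv2: "\<And>s. 0 \<le> s \<Longrightarrow> s < 1 \<Longrightarrow> (\<kappa>' has_real_derivative \<kappa>'' s) (at s within {0..<1})"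
    and P_nonneg: "\<And>s u w. 0 \<le> s \<Longrightarrow> s < 1 \<Longrightarrow> 0 \<le> P s u w"
    and P_sum: "\<And>s u. 0 \<le> s \<Longrightarrow> s < 1 \<Longrightarrow> (\<Sum>w\<in>UNIV. P s u w) = 1"
    and backward: "\<And>s u w. 0 \<le> s \<Longrightarrow> s < 1 \<Longrightarrow>
          ((\<lambda>r. P r u w) has_real_derivative - (\<Sum>y\<in>UNIV. Q s u y * P s y w)) (at s within {0..<1})"
    and t: "0 \<le> t" "t < 1"
    and xz: "x \<noteq> z"
  shows "((\<lambda>s. Q s x z) has_real_derivative
            (\<Sum>d\<in>UNIV. if agree_except x z d then
               (\<kappa>'' t * (1 - \<kappa> t) + (\<kappa>' t)\<^sup>2) / (1 - \<kappa> t)\<^sup>2 * posterior P t d (z d) x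
               - \<kappa>' t / (1 - \<kappa> t) * (\<Sum>y\<in>UNIV. posterior P t d (z d) y * Q t x y)
             else 0)) (at t within {0..<1})
       \<and> (\<forall>Qdot. ((\<lambda>s. Q s x z) has_real_derivative Qdot) (at t within {0..<1}) \<longrightarrow>
            \<bar>Qdot\<bar> \<le> \<bar>(\<kappa>'' t * (1 - \<kappa> t) + (\<kappa>' t)\<^sup>2) / (1 - \<kappa> t)\<^sup>2\<bar>
                      + real CARD('d) * (\<kappa>' t / (1 - \<kappa> t))\<^sup>2
          \<and> ((\<forall>s\<in>{0..<1}. \<forall>d y u. posterior P s d y u = posterior P t d y u) \<longrightarrow>
               \<bar>Qdot\<bar> \<le> \<bar>(\<kappa>'' t * (1 - \<kappa> t) + (\<kappa>' t)\<^sup>2) / (1 - \<kappa> t)\<^sup>2\<bar>))"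
proof -
  let ?F = "at t within {0..<1}"
  define k where "k = \<kappa>' t / (1 - \<kappa> t)"
  define A where "A = (\<kappa>'' t * (1 - \<kappa> t) + (\<kappa>' t)\<^sup>2) / (1 - \<kappa> t)\<^sup>2"
  define dQ where "dQ p' = (\<Sum>d\<in>UNIV. if agree_except x z d
    then A * posterior P t d (z d) x + k * p' d else 0)" for p' :: "'d \<Rightarrow> real"
  have tS: "t \<in> {0..<1}" and nt: "?F \<noteq> bot" using t by (auto simp: trivial_limit_within)
  have P_t: "\<And>u w. 0 \<le> P t u w" "\<And>u. (\<Sum>w\<in>UNIV. P t u w) = 1" using P_nonneg P_sum t by auto
  have "0 \<le> \<kappa>' t"
    by (rule mono_on_imp_has_real_derivative_nonneg[OF _ kappa_deriv[OF t] tS nt])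
      (auto intro!: mono_onI kappa_mono)
  then have k_nonneg: "0 \<le> k" using kappa_lt1[OF t] unfolding k_def by simp
  have dk: "((\<lambda>s. \<kappa>' s / (1 - \<kappa> s)) has_real_derivative A) ?F"
    using has_real_derivative_divide_one_minus[OF kappa_deriv2[OF t] kappa_deriv[OF t]] kappa_lt1[OF t]
    unfolding A_def by (simp add: power2_eq_square)
  have Q_has_dQ: "((\<lambda>s. Q s x z) has_real_derivative dQ p') ?F"
    if "\<And>d. ((\<lambda>s. posterior P s d (z d) x) has_real_derivative p' d) ?F" for p'
    using offdiag_rate_has_real_derivative[where p = "posterior P" and x = x and z = z, OF dk that] xz
    unfolding dQ_def k_def Q_def oracle_rate_def by simp
  have posterior_01: "\<bar>posterior P t d y u\<bar> \<le> 1" for d y u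
    using posterior_nonneg[of P t u] posterior_le_one[of P t u] P_t by auto
  let ?p' = "\<lambda>d. - (\<Sum>y\<in>UNIV. posterior P t d (z d) y * Q t x y)"
  have "\<bar>?p' d\<bar> \<le> real CARD('d) * k" for d
    unfolding abs_minus_cancel Q_def k_def
    by (rule abs_sum_posterior_oracle_rate_le) (use k_nonneg P_t in \<open>simp_all add: k_def\<close>)
  then have dQ_bound: "\<bar>dQ ?p'\<bar> \<le> \<bar>A\<bar> + k * (real CARD('d) * k)"
    unfolding dQ_def by (intro abs_sum_agree_except_affine_le xz k_nonneg posterior_01)
  have Q_has_dQ_backward: "((\<lambda>s. Q s x z) has_real_derivative dQ ?p') ?F"
    by (rule Q_has_dQ, rule DERIV_cong[OF posterior_has_real_derivative[OF backward[OF t]]])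
      (simp add: sum_negf mult.commute)
  have const_dQ_bound: "\<bar>dQ (\<lambda>_. 0)\<bar> \<le> \<bar>A\<bar> + k * 0"
    unfolding dQ_def by (intro abs_sum_agree_except_affine_le xz k_nonneg posterior_01) simp
  have Q_has_dQ_const: "((\<lambda>s. Q s x z) has_real_derivative dQ (\<lambda>_. 0)) ?F"
    if "\<forall>s\<in>{0..<1}. \<forall>d y u. posterior P s d y u = posterior P t d y u"
    using that by (intro Q_has_dQ has_field_derivative_transform_within[OF DERIV_const zero_less_one tS])
      auto
  have dQ_eq: "dQ ?p' = (\<Sum>d\<in>UNIV. if agree_except x z d then A * posterior P t d (z d) x
      - k * (\<Sum>y\<in>UNIV. posterior P t d (z d) y * Q t x y) else 0)"
    unfolding dQ_def by (intro sum.cong) auto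
  show ?thesis
    unfolding A_def[symmetric] k_def[symmetric] dQ_eq[symmetric]
  proof (intro conjI allI impI)
    fix Qdot assume "((\<lambda>s. Q s x z) has_real_derivative Qdot) ?F"
    note unique = has_field_derivative_unique[OF this _ nt]
    show "\<bar>Qdot\<bar> \<le> \<bar>A\<bar> + real CARD('d) * k\<^sup>2"
      using unique[OF Q_has_dQ_backward] dQ_bound by (simp add: power2_eq_square mult_ac)
    assume "\<forall>s\<in>{0..<1}. \<forall>d y u. posterior P s d y u = posterior P t d y u"
    then show "\<bar>Qdot\<bar> \<le> \<bar>A\<bar>" using unique[OF Q_has_dQ_const] const_dQ_bound by simp
  qed (fact Q_has_dQ_backward)
qed

end
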